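(* In the free group $\mathbb{F}_2$ on $a,b$, set $a_0:=b^{-1}$, $b_0:=aba^{-1}$ and recursively $a_n:=a_{n-1}b_{n-1}$, $b_n:=a_{n-1}^{-1}b_{n-1}^{-1}$ for $n\ge1$. Let $n>0$. Then the reduced words representing $a_n$ and $b_n$ satisfy: if $n\equiv 0\pmod 3$, $a_n$ begins with $b^{-1}$ and ends with $b^{-1}$, and $b_n$ begins with $ab$ and ends with $ba^{-1}$; if $n\equiv 1\pmod 3$, $a_n$ begins with $b^{-1}$ and ends with $ba^{-1}$, and $b_n$ begins with $b$ and ends with $b^{-1}a^{-1}$; if $n\equiv 2\pmod 3$, $a_n$ begins with $b^{-1}$ and ends with $b^{-1}a^{-1}$, and $b_n$ begins with $ab^{-1}$ and ends with $b^{-1}$. Consequently, for all $n\in\mathbb{N}$ there is no cancellation in the product $a_n^{-1}b_n^{-1}$, and the product $a_nb_n$ involves cancellation if and only if $n\equiv 2\pmod 3$, in which case exactly the term $a^{-1}a$ cancels. Hence for $n\in\mathbb{N}$, $$\ell(a_{n+1})=\ell(a_n)+\ell(b_n)-\begin{cases}2 & n\equiv 2\pmod 3\\ 0&\text{otherwise}\end{cases},\qquad \ell(b_{n+1})=\ell(a_n)+\ell(b_n),$$ and $$\ell(a_n)=\begin{cases}\frac{13\cdot 2^n-6}{7}& n\equiv0\pmod 3\\ \frac{13\cdot 2^n+2}{7}& n\equiv1\pmod 3\\ \frac{13\cdot 2^n+4}{7}& n\equiv2\pmod 3\end{cases},\qquad \ell(b_n)=\begin{cases}\frac{13\cdot 2^n+8}{7}&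 n\equiv0\pmod 3\\ \frac{13\cdot 2^n+2}{7}& n\equiv1\pmod 3\\ \frac{13\cdot 2^n+4}{7}& n\equiv2\pmod 3\end{cases}.$$ In particular there is a constant $C'>0$ with $\ell(a_n)\le C'\cdot 2^n$ for all $n$.
   Context: $\ell$ denotes word length in $\mathbb{F}_2$ with respect to $\{a,a^{-1},b,b^{-1}\}$. *)

theory Defs
  imports Complex_Main "HOL-Library.Sublist"
begin

text \<open>The free group F_2 on generators a, b, modelled by freely reduced words.
  A letter is a pair (g, e) with g a generator and e = True meaning the inverse g^-1.\<close>

datatype gen = A | B

type_synonym letter = "gen \<times> bool"
type_synonym word = "letter list"

definition inv_letter :: "letter \<Rightarrow> letter" where
  "inv_letter x = (fst x, \<not> snd x)"

fun push :: "letter \<Rightarrow> word \<Rightarrow> word" where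
  "push x [] = [x]"
| "push x (y # ys) = (if y = inv_letter x then ys else x # y # ys)"

definition reduce :: "word \<Rightarrow> word" where
  "reduce w = foldr push w []"

definition reduced :: "word \<Rightarrow> bool" where
  "reduced w \<longleftrightarrow> (\<forall>i. Suc i < length w \<longrightarrow> w ! Suc i \<noteq> inv_letter (w ! i))"

definition gmult :: "word \<Rightarrow> word \<Rightarrow> word" where
  "gmult u v = reduce (u @ v)"

definition ginv :: "word \<Rightarrow> word" where
  "ginv w = rev (map inv_letter w)"

definition ga :: word where "ga = [(A, False)]"
definition gb :: word where "gb = [(B, False)]"

definition wlen :: "word \<Rightarrow> nat" where
  "wlen w = length (reduce w)"

fun seq_ab :: "nat \<Rightarrow> word \<times> word" where
  "seq_ab 0 = (ginv gb, gmult (gmult ga gb) (ginv ga))"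
| "seq_ab (Suc n) = (gmult (fst (seq_ab n)) (snd (seq_ab n)),
                     gmult (ginv (fst (seq_ab n))) (ginv (snd (seq_ab n))))"

definition an :: "nat \<Rightarrow> word" where "an n = fst (seq_ab n)"
definition bn :: "nat \<Rightarrow> word" where "bn n = snd (seq_ab n)"

end

theory Submission
  imports Defs
begin

text \<open>Only the boundary letters of \<open>a\<^sub>n\<close> and \<open>b\<^sub>n\<close> matter. They follow a cycle of
  period 3 (already valid at \<open>n = 0\<close>, where the prefix and suffix of \<open>b\<^sub>0 = aba\<^sup>-\<^sup>1\<close>
  overlap), and they decide what cancels at the junctions: \<open>a\<^sub>n\<^sup>-\<^sup>1 b\<^sub>n\<^sup>-\<^sup>1\<close> meets
  \<open>b a\<close> or \<open>b b\<close> and never cancels, while \<open>a\<^sub>n b\<^sub>n\<close> cancels only for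
  \<open>n \<equiv> 2\<close>, where \<open>\<dots>b\<^sup>-\<^sup>1a\<^sup>-\<^sup>1 \<cdot> ab\<^sup>-\<^sup>1\<dots>\<close> loses exactly \<open>a\<^sup>-\<^sup>1a\<close>. So all words stay reduced,
  the lengths obey a linear recurrence with a period-3 correction, and the
  closed forms follow by induction.\<close>

lemma inv_letter_inv_letter [simp]: "inv_letter (inv_letter x) = x"
  by (simp add: inv_letter_def)

lemma inv_letter_Pair [simp]: "inv_letter (g, e) = (g, \<not> e)"
  by (simp add: inv_letter_def)

lemma ginv_Nil [simp]: "ginv [] = []"
  and ginv_Cons [simp]: "ginv (x # u) = ginv u @ [inv_letter x]"
  by (simp_all add: ginv_def)

lemma ginv_append [simp]: "ginv (u @ v) = ginv v @ ginv u"
  by (simp add: ginv_def)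

lemma reduced_Nil [simp]: "reduced []"
  and reduced_singleton [simp]: "reduced [x]"
  by (simp_all add: reduced_def)

lemma reduced_Cons_Cons [simp]:
  "reduced (x # y # ys) \<longleftrightarrow> y \<noteq> inv_letter x \<and> reduced (y # ys)"
  unfolding reduced_def by (auto simp: nth_Cons split: nat.splits)

lemma reduced_Cons: "reduced (x # ys) \<longleftrightarrow> reduced ys \<and> (ys \<noteq> [] \<longrightarrow> hd ys \<noteq> inv_letter x)"
  by (cases ys) auto

lemma reduced_append:
  "reduced (u @ v) \<longleftrightarrow>
     reduced u \<and> reduced v \<and> (u \<noteq> [] \<longrightarrow> v \<noteq> [] \<longrightarrow> hd v \<noteq> inv_letter (last u))"
  by (induction u) (auto simp: reduced_Cons)

lemma reduced_ginv: "reduced u \<Longrightarrow> reduced (ginv u)"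
proof (induction u)
  case (Cons x u)
  then show ?case
    by (auto simp: reduced_Cons reduced_append ginv_def last_rev hd_map inv_letter_def)
qed (simp add: ginv_def)

lemma reduced_push: "reduced w \<Longrightarrow> reduced (push x w)"
  by (cases w) (auto simp: reduced_Cons)

lemma reduced_reduce: "reduced (reduce w)"
  unfolding reduce_def by (induction w) (auto intro: reduced_push)

lemma foldr_push_reduced: "reduced (u @ v) \<Longrightarrow> foldr push u v = u @ v"
proof (induction u)
  case (Cons x u)
  then have "reduced (u @ v)" by (simp add: reduced_Cons)
  with Cons show ?case by (cases "u @ v") auto
qed simp

lemma reduce_reduced: "reduced w \<Longrightarrow> reduce w = w"
  using foldr_push_reduced[of w "[]"] by (simp add: reduce_def)

lemma gmult_eq_append: "reduced (u @ v) \<Longrightarrow> gmult u v = u @ v"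
  by (simp add: gmult_def reduce_reduced)

lemma push_push_inv_letter:
  assumes "reduced w" shows "push x (push (inv_letter x) w) = w"
proof (cases w)
  case (Cons y ys)
  with assms show ?thesis by (cases ys) auto
qed simp

lemma reduce_cancel_pair: "reduce (u @ x # inv_letter x # v) = reduce (u @ v)"
  using push_push_inv_letter[OF reduced_reduce, of x v] by (simp add: reduce_def)

abbreviation (input) Ap :: letter where "Ap \<equiv> (A, False)"
abbreviation (input) Ai :: letter where "Ai \<equiv> (A, True)"
abbreviation (input) Bp :: letter where "Bp \<equiv> (B, False)"
abbreviation (input) Bi :: letter where "Bi \<equiv> (B, True)"

definition boundary_shape :: "nat \<Rightarrow> word \<Rightarrow> word \<Rightarrow> bool" where
  "boundary_shape k u v \<longleftrightarrow>
     (k mod 3 = 0 \<longrightarrow> prefix [Bi] u \<and> suffix [Bi] u \<and> prefix [Ap, Bp] v \<and> suffix [Bp, Ai] v) \<and>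
     (k mod 3 = 1 \<longrightarrow> prefix [Bi] u \<and> suffix [Bp, Ai] u \<and> prefix [Bp] v \<and> suffix [Bi, Ai] v) \<and>
     (k mod 3 = 2 \<longrightarrow> prefix [Bi] u \<and> suffix [Bi, Ai] u \<and> prefix [Ap, Bi] v \<and> suffix [Bi] v)"

lemma hd_ginv: "u \<noteq> [] \<Longrightarrow> hd (ginv u) = inv_letter (last u)"
  and last_ginv: "u \<noteq> [] \<Longrightarrow> last (ginv u) = inv_letter (hd u)"
  by (simp_all add: ginv_def hd_rev last_rev hd_map last_map)

lemma prefix_hd: "prefix xs u \<Longrightarrow> xs \<noteq> [] \<Longrightarrow> u \<noteq> [] \<and> hd u = hd xs"
  by (auto simp: prefix_def)

lemma suffix_last: "suffix xs u \<Longrightarrow> xs \<noteq> [] \<Longrightarrow> u \<noteq> [] \<and> last u = last xs"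
  by (auto simp: suffix_def)

lemma boundary_shape_inverse_product_reduced:
  assumes "boundary_shape k u v" "reduced u" "reduced v"
  shows "reduced (ginv u @ ginv v)"
proof -
  have "u \<noteq> []" "hd u = Bi" "v \<noteq> []" "last v = Ai \<or> last v = Bi"
    using assms(1)
    by (auto simp: boundary_shape_def dest!: prefix_hd suffix_last)
  then show ?thesis
    using assms reduced_ginv by (auto simp: reduced_append hd_ginv last_ginv inv_letter_def)
qed

lemma boundary_shape_product_reduced:
  assumes "boundary_shape k u v" "k mod 3 \<noteq> 2" "reduced u" "reduced v"
  shows "reduced (u @ v)"
proof -
  have "u \<noteq> []" "v \<noteq> []" "last u = Bi \<and> hd v = Ap \<or> last u = Ai \<and> hd v = Bp"
    using assms(1,2)
    by (auto simp: boundary_shape_def dest!: prefix_hd suffix_last)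
  then show ?thesis
    using assms(3,4) by (auto simp: reduced_append)
qed

lemma boundary_shape_product_cancel:
  assumes "boundary_shape k u v" "k mod 3 = 2" "reduced u" "reduced v"
  shows "last u = Ai" "hd v = Ap" "reduced (butlast u @ tl v)"
    and "gmult u v = butlast u @ tl v"
proof -
  obtain u' v' where u: "u = u' @ [Bi, Ai]" and v: "v = [Ap, Bi] @ v'"
    using assms(1,2) by (auto simp: boundary_shape_def prefix_def suffix_def)
  show "last u = Ai" "hd v = Ap" using u v by simp_all
  have "reduced (u' @ [Bi])" "reduced (Bi # v')"
    using assms(3,4) unfolding u v by (simp_all add: reduced_append)
  then show reduced: "reduced (butlast u @ tl v)"
    unfolding u v by (simp add: reduced_append butlast_append)
  have "gmult u v = reduce ((u' @ [Bi]) @ Ai # inv_letter Ai # Bi # v')"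
    unfolding gmult_def u v by simp
  also have "\<dots> = reduce (butlast u @ tl v)"
    by (simp only: reduce_cancel_pair) (simp add: u v butlast_append)
  also have "\<dots> = butlast u @ tl v"
    using reduced by (rule reduce_reduced)
  finally show "gmult u v = butlast u @ tl v" .
qed

text \<open>The equation premise lets the simplifier evaluate \<open>ginv\<close> on the concrete boundary word.\<close>

lemma prefix_ginv_appendI: "suffix xs u \<Longrightarrow> ginv xs = ys \<Longrightarrow> prefix ys (ginv u @ w)"
  by (auto simp: suffix_def)

lemma suffix_append_ginvI: "prefix xs v \<Longrightarrow> ginv xs = ys \<Longrightarrow> suffix ys (w @ ginv v)"
  by (auto simp: prefix_def suffix_def)

lemma boundary_shape_Suc:
  assumes "boundary_shape k u v" "reduced u" "reduced v"
  shows "boundary_shape (Suc k) (gmult u v) (gmult (ginv u) (ginv v))"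
proof -
  have inv: "gmult (ginv u) (ginv v) = ginv u @ ginv v"
    using assms boundary_shape_inverse_product_reduced gmult_eq_append by blast
  show ?thesis
  proof (cases "k mod 3 = 2")
    case False
    then have "gmult u v = u @ v"
      using assms boundary_shape_product_reduced gmult_eq_append by simp
    with False assms(1) show ?thesis
      by (auto simp: boundary_shape_def inv mod_Suc
          intro: suffix_appendI prefix_ginv_appendI suffix_append_ginvI)
  next
    case True
    obtain u' v' where u: "u = u' @ [Bi, Ai]" and v: "v = [Ap, Bi] @ v'"
      using assms(1) True by (auto simp: boundary_shape_def prefix_def suffix_def)
    have "prefix [Bi] (butlast u @ tl v)"
      using assms(1) True unfolding boundary_shape_def u by (cases u') auto
    moreover have "suffix [Bi] (butlast u @ tl v)"
      using assms(1) True unfolding boundary_shape_def v by (auto simp: suffix_Cons intro: suffix_appendI)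
    ultimately show ?thesis
      using True assms(1)
      by (auto simp: boundary_shape_def inv mod_Suc boundary_shape_product_cancel[OF assms(1) True assms(2,3)]
          intro: prefix_ginv_appendI suffix_append_ginvI)
  qed
qed

lemma an_Suc: "an (Suc n) = gmult (an n) (bn n)"
  and bn_Suc: "bn (Suc n) = gmult (ginv (an n)) (ginv (bn n))"
  by (simp_all add: an_def bn_def)

lemma an_0: "an 0 = [Bi]"
  and bn_0: "bn 0 = [Ap, Bp, Ai]"
  by (simp_all add: an_def bn_def gmult_def reduce_def ga_def gb_def)

lemma reduced_an: "reduced (an n)"
  and reduced_bn: "reduced (bn n)"
  by (cases n; simp add: an_0 bn_0 an_Suc bn_Suc gmult_def reduced_reduce)+

lemma boundary_shape_an_bn: "boundary_shape n (an n) (bn n)"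
proof (induction n)
  case 0
  show ?case by (simp add: boundary_shape_def an_0 bn_0 suffix_Cons)
next
  case (Suc n)
  then show ?case
    unfolding an_Suc bn_Suc using boundary_shape_Suc reduced_an reduced_bn by blast
qed

lemma wlen_an: "wlen (an n) = length (an n)"
  and wlen_bn: "wlen (bn n) = length (bn n)"
  by (simp_all add: wlen_def reduce_reduced reduced_an reduced_bn)

lemma length_an_bn_Suc:
  "length (an (Suc n)) + (if n mod 3 = 2 then 2 else 0) = length (an n) + length (bn n)"
  "length (bn (Suc n)) = length (an n) + length (bn n)"
proof -
  note shape = boundary_shape_an_bn[of n] and red = reduced_an[of n] reduced_bn[of n]
  show "length (bn (Suc n)) = length (an n) + length (bn n)"
    using boundary_shape_inverse_product_reduced[OF shape red]
    by (simp add: bn_Suc gmult_eq_append ginv_def)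
  show "length (an (Suc n)) + (if n mod 3 = 2 then 2 else 0) = length (an n) + length (bn n)"
  proof (cases "n mod 3 = 2")
    case True
    moreover have "an n \<noteq> []" "bn n \<noteq> []"
      using shape True by (auto simp: boundary_shape_def dest!: prefix_hd)
    ultimately show ?thesis
      using boundary_shape_product_cancel(4)[OF shape True red]
      by (cases "an n"; cases "bn n") (simp_all add: an_Suc)
  next
    case False
    then show ?thesis
      using boundary_shape_product_reduced[OF shape False red] by (simp add: an_Suc gmult_eq_append)
  qed
qed

lemma wlen_an_bn_closed_form:
  "7 * int (wlen (an n)) =
     (if n mod 3 = 0 then 13 * 2^n - 6 else if n mod 3 = 1 then 13 * 2^n + 2 else 13 * 2^n + 4) \<and>
   7 * int (wlen (bn n)) =
     (if n mod 3 = 0 then 13 * 2^n + 8 else if n mod 3 = 1 then 13 * 2^n + 2 else 13 * 2^n + 4)"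
  unfolding wlen_an wlen_bn
proof (induction n)
  case 0
  show ?case by (simp add: an_0 bn_0)
next
  case (Suc n)
  have recurrence: "int (length (an (Suc n))) + (if n mod 3 = 2 then 2 else 0) =
          int (length (an n)) + int (length (bn n))"
       "int (length (bn (Suc n))) = int (length (an n)) + int (length (bn n))"
    using length_an_bn_Suc[of n] by (auto)
  consider "n mod 3 = 0" "Suc n mod 3 = 1" | "n mod 3 = 1" "Suc n mod 3 = 2"
    | "n mod 3 = 2" "Suc n mod 3 = 0"
    by (cases "n mod 3 = 0"; cases "n mod 3 = 1") (auto simp: mod_Suc)
  then show ?case
    using Suc.IH recurrence by cases simp_all
qed

lemma reduce_an_bn_cancels_iff: "reduce (an n @ bn n) \<noteq> an n @ bn n \<longleftrightarrow> n mod 3 = 2"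
proof (cases "n mod 3 = 2")
  case True
  then have "length (reduce (an n @ bn n)) + 2 = length (an n @ bn n)"
    using length_an_bn_Suc(1)[of n] by (simp add: an_Suc gmult_def)
  with True show ?thesis by auto
next
  case False
  with boundary_shape_product_reduced[OF boundary_shape_an_bn False reduced_an reduced_bn]
  show ?thesis by (simp add: reduce_reduced)
qed

lemma wlen_an_le: "real (wlen (an n)) \<le> 3 * 2 ^ n"
proof -
  have "7 * int (wlen (an n)) \<le> 13 * 2 ^ n + 4"
    using wlen_an_bn_closed_form[of n] by auto
  also have "\<dots> \<le> 21 * 2 ^ n"
    using one_le_power[of "2::int" n] by linarith
  finally have "int (wlen (an n)) \<le> 3 * 2 ^ n" by simp
  then have "real_of_int (int (wlen (an n))) \<le> real_of_int (3 * 2 ^ n)"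
    by (simp only: of_int_le_iff)
  then show ?thesis by simp
qed

theorem lemma2p2:
  shows "(\<forall>n>0.
     (n mod 3 = 0 \<longrightarrow>
        prefix [(B,True)] (an n) \<and> suffix [(B,True)] (an n) \<and>
        prefix [(A,False),(B,False)] (bn n) \<and> suffix [(B,False),(A,True)] (bn n)) \<and>
     (n mod 3 = 1 \<longrightarrow>
        prefix [(B,True)] (an n) \<and> suffix [(B,False),(A,True)] (an n) \<and>
        prefix [(B,False)] (bn n) \<and> suffix [(B,True),(A,True)] (bn n)) \<and>
     (n mod 3 = 2 \<longrightarrow>
        prefix [(B,True)] (an n) \<and> suffix [(B,True),(A,True)] (an n) \<and>
        prefix [(A,False),(B,True)] (bn n) \<and> suffix [(B,True)] (bn n)))
   \<and> (\<forall>n. reduce (ginv (an n) @ ginv (bn n)) = ginv (an n) @ ginv (bn n))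
   \<and> (\<forall>n. (reduce (an n @ bn n) \<noteq> an n @ bn n) \<longleftrightarrow> n mod 3 = 2)
   \<and> (\<forall>n. n mod 3 = 2 \<longrightarrow>
        last (an n) = (A,True) \<and> hd (bn n) = (A,False) \<and>
        reduce (an n @ bn n) = butlast (an n) @ tl (bn n))
   \<and> (\<forall>n. wlen (an (Suc n)) = wlen (an n) + wlen (bn n) - (if n mod 3 = 2 then 2 else 0)
          \<and> wlen (bn (Suc n)) = wlen (an n) + wlen (bn n))
   \<and> (\<forall>n. 7 * int (wlen (an n)) =
          (if n mod 3 = 0 then 13 * 2^n - 6 else if n mod 3 = 1 then 13 * 2^n + 2 else 13 * 2^n + 4)
        \<and> 7 * int (wlen (bn n)) =
          (if n mod 3 = 0 then 13 * 2^n + 8 else if n mod 3 = 1 then 13 * 2^n + 2 else 13 * 2^n + 4))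
   \<and> (\<exists>C::real. C > 0 \<and> (\<forall>n. real (wlen (an n)) \<le> C * 2^n))"
proof -
  note shape = boundary_shape_an_bn and red = reduced_an reduced_bn
  have cancel: "last (an n) = (A,True) \<and> hd (bn n) = (A,False) \<and>
                reduce (an n @ bn n) = butlast (an n) @ tl (bn n)" if "n mod 3 = 2" for n
    using boundary_shape_product_cancel[OF shape that red] by (simp add: gmult_def)
  have recurrence: "wlen (an (Suc n)) = wlen (an n) + wlen (bn n) - (if n mod 3 = 2 then 2 else 0)
        \<and> wlen (bn (Suc n)) = wlen (an n) + wlen (bn n)" for n
    using length_an_bn_Suc[of n] by (simp add: wlen_an wlen_bn)
  have bounded: "\<exists>C::real. C > 0 \<and> (\<forall>n. real (wlen (an n)) \<le> C * 2^n)"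
    using wlen_an_le by (intro exI[of _ 3]) simp
  show ?thesis
    using shape[unfolded boundary_shape_def]
      boundary_shape_inverse_product_reduced[OF shape red, THEN reduce_reduced]
      reduce_an_bn_cancels_iff cancel recurrence wlen_an_bn_closed_form bounded
    by (intro conjI) simp_all
qed

end
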